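(* Let $H$ be a Hilbert space, $\theta\in(0,\pi)$, and let $f:\Sigma_\theta\to H$ be a bounded analytic function. Suppose that for some $0<\eta<\theta$ the functions $t\mapsto f(e^{\pm i\eta}t)$ belong to $L^2(\mathbb{R}_+,\frac{dt}{t};H)$. Then $\sum_{n\in\mathbb Z}\|f(2^n)\|_H^2<\infty$.
   Context: $\Sigma_\theta=\{z\in\mathbb C\setminus\{0\}:|\arg z|<\theta\}$. *)

theory Defs
  imports "HOL-Analysis.Analysis"
begin

definition sector :: "real \<Rightarrow> complex set" where
  "sector \<theta> = {z. z \<noteq> 0 \<and> \<bar>Arg z\<bar> < \<theta>}"

text \<open>A complex Hilbert space is modelled as a real Hilbert space (type class
  real_inner + complete_space) together with a complex structure J (multiplication
  by i): J is real-linear, J o J = -id, and J preserves the real inner product.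
  The complex inner product is then  inner x y + i * inner (J x) y.\<close>
definition complex_structure :: "('a::real_inner \<Rightarrow> 'a) \<Rightarrow> bool" where
  "complex_structure J \<longleftrightarrow> linear J \<and> (\<forall>x. J (J x) = - x) \<and>
     (\<forall>x y. inner (J x) (J y) = inner x y)"

definition cscale :: "('a::real_vector \<Rightarrow> 'a) \<Rightarrow> complex \<Rightarrow> 'a \<Rightarrow> 'a" where
  "cscale J c x = Re c *\<^sub>R x + Im c *\<^sub>R J x"

definition holomorphic_wrt ::
  "('a::real_normed_vector \<Rightarrow> 'a) \<Rightarrow> (complex \<Rightarrow> 'a) \<Rightarrow> complex set \<Rightarrow> bool" where
  "holomorphic_wrt J f S \<longleftrightarrow>
     (\<forall>z\<in>S. \<exists>v. (f has_derivative (\<lambda>h. cscale J h v)) (at z))"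

end

theory Submission
  imports Defs "HOL-Complex_Analysis.Complex_Analysis"
begin

text \<open>In the variable \<open>s = ln z\<close> the sector becomes the strip \<open>\<bar>Im s\<bar> < \<theta>\<close>. For a unit
  vector \<open>v\<close> the scalar function \<open>h s = \<langle>f (exp s), v\<rangle>\<close> is holomorphic and bounded there, and
  Cauchy's formula for \<open>h(s)\<^sup>2 exp (- (s - x)\<^sup>2)\<close> on the rectangles \<open>[x - R, x + R] \<times> [-\<eta>, \<eta>]\<close>
  gives, as \<open>R \<rightarrow> \<infinity>\<close> (the Gaussian factor kills the vertical sides),
  \<open>\<pi> \<bar>h x\<bar>\<^sup>2 \<le> exp (\<eta>\<^sup>2) / \<eta> * \<integral> H t * exp (- (t - x)\<^sup>2) dt\<close>, where
  \<open>H t = \<parallel>f (cis \<eta> * e\<^sup>t)\<parallel>\<^sup>2 + \<parallel>f (cis (-\<eta>) * e\<^sup>t)\<parallel>\<^sup>2\<close>.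
  Taking \<open>v = sgn (f (e\<^sup>x))\<close> and \<open>x = n ln 2\<close>, the bound \<open>\<Sum>\<^sub>n exp (- (t - n ln 2)\<^sup>2) \<le> 8 exp (1/4)\<close>
  controls \<open>\<Sum>\<^sub>n \<parallel>f (2\<^sup>n)\<parallel>\<^sup>2\<close> by a multiple of \<open>\<integral> H\<close>, the sum of the two \<open>L\<^sup>2(dt/t)\<close> norms.\<close>

lemma norm_complex_structure:
  assumes "complex_structure J"
  shows "norm (J y) = norm y"
  using assms by (simp add: complex_structure_def norm_eq_sqrt_inner)

lemma inner_complex_structure_self:
  assumes J: "complex_structure J"
  shows "inner (J y) y = 0"
proof -
  have "inner (J y) y = inner (J (J y)) (J y)"
    using J unfolding complex_structure_def by metis
  also have "\<dots> = - inner (J y) y"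
    using J unfolding complex_structure_def by (simp add: inner_commute)
  finally show ?thesis by simp
qed

lemma bounded_linear_complex_structure:
  assumes J: "complex_structure J"
  shows "bounded_linear J"
proof -
  have "linear J" using J unfolding complex_structure_def by blast
  then show ?thesis
    by (intro bounded_linear_intro[where K=1])
       (auto simp: linear_add linear_scale norm_complex_structure[OF J])
qed

text \<open>The complex inner product \<open>\<langle>y, v\<rangle>\<close> induced by \<open>J\<close>, conjugated so that it is
  complex-linear in \<open>y\<close>.\<close>
definition coordinate :: "('a::real_inner \<Rightarrow> 'a) \<Rightarrow> 'a \<Rightarrow> 'a \<Rightarrow> complex" where
  "coordinate J v y = Complex (inner y v) (- inner (J y) v)"

lemma norm_coordinate_le:
  assumes J: "complex_structure J" and v: "norm v \<le> 1"
  shows "norm (coordinate J v y) \<le> 2 * norm y"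
proof -
  have "norm (coordinate J v y) \<le> \<bar>inner y v\<bar> + \<bar>inner (J y) v\<bar>"
    using cmod_le[of "coordinate J v y"] by (simp add: coordinate_def)
  also have "\<dots> \<le> norm y * norm v + norm (J y) * norm v"
    using Cauchy_Schwarz_ineq2[of y v] Cauchy_Schwarz_ineq2[of "J y" v] by simp
  also have "\<dots> \<le> norm y + norm (J y)"
    using v by (intro add_mono mult_left_le) auto
  finally show ?thesis using norm_complex_structure[OF J] by simp
qed

lemma coordinate_sgn_self:
  assumes J: "complex_structure J"
  shows "coordinate J (sgn y) y = of_real (norm y)"
  using inner_complex_structure_self[OF J, of y]
  by (cases "y = 0") (simp_all add: coordinate_def sgn_div_norm complex_eq_iff inner_commute
      power2_norm_eq_inner[symmetric] power2_eq_square)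

lemma coordinate_cscale:
  assumes J: "complex_structure J"
  shows "coordinate J v (cscale J h w) = h * coordinate J v w"
proof -
  have "linear J" and JJ: "\<And>x. J (J x) = - x"
    using J unfolding complex_structure_def by blast+
  then have "J (cscale J h w) = Re h *\<^sub>R J w - Im h *\<^sub>R w"
    by (simp add: cscale_def linear_add linear_scale)
  then show ?thesis
    by (simp add: coordinate_def cscale_def complex_eq_iff inner_add_left inner_diff_left)
qed

lemma bounded_linear_coordinate:
  assumes J: "complex_structure J"
  shows "bounded_linear (coordinate J v)"
proof -
  have eq: "coordinate J v = (\<lambda>y. of_real (inner y v) - \<i> * of_real (inner (J y) v))"
    by (simp add: fun_eq_iff coordinate_def complex_eq_iff)
  have re: "bounded_linear (\<lambda>y. complex_of_real (inner y v))"
    using bounded_linear_compose[OF bounded_linear_of_real bounded_linear_inner_left] .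
  have "bounded_linear (\<lambda>y. complex_of_real (inner (J y) v))"
    using bounded_linear_compose[OF re bounded_linear_complex_structure[OF J]] .
  then show ?thesis
    unfolding eq by (intro bounded_linear_sub re bounded_linear_compose[OF bounded_linear_mult_right])
qed

lemma has_field_derivative_coordinate:
  assumes J: "complex_structure J"
    and f: "(f has_derivative (\<lambda>h. cscale J h w)) (at z)"
  shows "((\<lambda>z. coordinate J v (f z)) has_field_derivative coordinate J v w) (at z)"
proof -
  have "(\<lambda>h. h * coordinate J v w) = (*) (coordinate J v w)"
    by (simp add: fun_eq_iff mult.commute)
  with bounded_linear.has_derivative[OF bounded_linear_coordinate[OF J, of v] f]
  show ?thesis
    unfolding has_field_derivative_def coordinate_cscale[OF J] by simp
qed

lemma holomorphic_on_coordinate: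
  assumes J: "complex_structure J" and f: "holomorphic_wrt J f S"
  shows "(\<lambda>z. coordinate J v (f z)) holomorphic_on S"
  unfolding holomorphic_on_def
proof
  fix z assume "z \<in> S"
  then obtain w where "(f has_derivative (\<lambda>h. cscale J h w)) (at z)"
    using f unfolding holomorphic_wrt_def by blast
  then show "(\<lambda>z. coordinate J v (f z)) field_differentiable at z within S"
    using has_field_derivative_coordinate[OF J] field_differentiable_at_within
    unfolding field_differentiable_def by blast
qed

lemma le_of_forall_pos_le_add_divide:
  fixes a b c :: real
  assumes "\<And>R. 0 < R \<Longrightarrow> a \<le> b + c / R"
  shows "a \<le> b"
proof (rule tendsto_lowerbound)
  show "((\<lambda>R. b + c / R) \<longlongrightarrow> b) at_top"
    using tendsto_add[OF tendsto_const tendsto_divide_0[OF tendsto_const filterlim_at_top_imp_at_infinity[OF filterlim_ident]]]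
    by simp
  show "\<forall>\<^sub>F R in at_top. a \<le> b + c / R"
    using eventually_gt_at_top[of 0] by eventually_elim (rule assms)
qed simp

lemma norm_exp_neg_square:
  "norm (exp (- (w - of_real x)\<^sup>2)) = exp ((Im w)\<^sup>2 - (Re w - x)\<^sup>2)"
  by (simp add: power2_eq_square)

lemma norm_square_mult_gaussian_le:
  fixes c w :: complex
  assumes "\<bar>Im w\<bar> \<le> \<eta>" "norm c \<le> B"
  shows "norm (c\<^sup>2 * exp (- (w - of_real x)\<^sup>2)) \<le> B\<^sup>2 * exp (\<eta>\<^sup>2)"
proof -
  have "(Im w)\<^sup>2 \<le> \<eta>\<^sup>2"
    using assms(1) abs_le_square_iff[of "Im w" \<eta>] by auto
  then have "(Im w)\<^sup>2 - (Re w - x)\<^sup>2 \<le> \<eta>\<^sup>2"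
    using zero_le_power2[of "Re w - x"] by linarith
  moreover have "(norm c)\<^sup>2 \<le> B\<^sup>2"
    using assms(2) by (auto intro: power_mono)
  ultimately show ?thesis
    unfolding norm_mult norm_power norm_exp_neg_square by (intro mult_mono) auto
qed

lemma norm_contour_integral_horizontal_le:
  assumes pq: "p < q" and F: "continuous_on (closed_segment (Complex p y) (Complex q y)) F"
    and \<phi>: "\<phi> integrable_on {p..q}"
    and le: "\<And>t. t \<in> {p..q} \<Longrightarrow> norm (F (Complex t y)) \<le> \<phi> t"
  shows "norm (contour_integral (linepath (Complex p y) (Complex q y)) F) \<le> integral {p..q} \<phi>"
proof -
  have lp: "linepath (Complex p y) (Complex q y) u = linepath (of_real p) (of_real q) u + \<i> * of_real y"
    for u by (simp add: linepath_def complex_eq_iff algebra_simps)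
  have "contour_integral (linepath (Complex p y) (Complex q y)) F
      = contour_integral (linepath (of_real p) (of_real q)) (\<lambda>z. F (z + \<i> * of_real y))"
    unfolding contour_integral_integral lp vector_derivative_linepath_at
    by (simp add: complex_eq_iff)
  also have "\<dots> = integral {p..q} (\<lambda>t. F (Complex t y))"
    using pq by (subst contour_integral_linepath_Reals_eq) (auto simp: Complex_eq)
  finally have eq: "contour_integral (linepath (Complex p y) (Complex q y)) F
      = integral {p..q} (\<lambda>t. F (Complex t y))" .
  have "continuous_on {p..q} (\<lambda>t. F (Complex t y))"
  proof (rule continuous_on_compose2[OF F])
    show "continuous_on {p..q} (\<lambda>t. Complex t y)"
      by (intro continuous_intros)
    show "(\<lambda>t. Complex t y) ` {p..q} \<subseteq> closed_segment (Complex p y) (Complex q y)"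
      using pq by (auto simp: closed_segment_same_Im closed_segment_eq_real_ivl)
  qed
  then have "(\<lambda>t. F (Complex t y)) integrable_on {p..q}"
    by (rule integrable_continuous_interval)
  then show ?thesis
    unfolding eq by (rule integral_norm_bound_integral[OF _ \<phi> le])
qed

lemma norm_contour_integral_cauchy_kernel_horizontal:
  fixes \<Phi> :: "complex \<Rightarrow> complex"
  assumes pq: "p < q" and y: "y \<noteq> 0"
    and \<Phi>: "continuous_on (closed_segment (Complex p y) (Complex q y)) \<Phi>"
  shows "norm (contour_integral (linepath (Complex p y) (Complex q y)) (\<lambda>w. \<Phi> w / (w - of_real x)))
    \<le> integral {p..q} (\<lambda>t. norm (\<Phi> (Complex t y))) / \<bar>y\<bar>"
proof -
  have seg: "closed_segment (Complex p y) (Complex q y) = (\<lambda>t. Complex t y) ` {p..q}"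
    using pq by (auto simp: closed_segment_same_Im closed_segment_eq_real_ivl image_iff complex_eq_iff)
  have "continuous_on {p..q} (\<lambda>t. \<Phi> (Complex t y))"
    using \<Phi> unfolding seg by (intro continuous_on_compose2[OF \<Phi>] continuous_intros) (auto simp: seg)
  then have "(\<lambda>t. norm (\<Phi> (Complex t y)) / \<bar>y\<bar>) integrable_on {p..q}"
    using y by (intro integrable_continuous_interval continuous_intros) auto
  moreover have "continuous_on (closed_segment (Complex p y) (Complex q y)) (\<lambda>w. \<Phi> w / (w - of_real x))"
    using y by (intro continuous_intros \<Phi>) (auto simp: seg complex_eq_iff)
  moreover have "norm (\<Phi> (Complex t y) / (Complex t y - of_real x)) \<le> norm (\<Phi> (Complex t y)) / \<bar>y\<bar>"
    for t
  proof -
    have "\<bar>y\<bar> \<le> norm (Complex t y - of_real x)"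
      using abs_Im_le_cmod[of "Complex t y - of_real x"] by simp
    then show ?thesis
      unfolding norm_divide using y by (intro divide_left_mono mult_pos_pos) auto
  qed
  ultimately have "norm (contour_integral (linepath (Complex p y) (Complex q y)) (\<lambda>w. \<Phi> w / (w - of_real x)))
      \<le> integral {p..q} (\<lambda>t. norm (\<Phi> (Complex t y)) / \<bar>y\<bar>)"
    by (intro norm_contour_integral_horizontal_le[OF pq]) auto
  then show ?thesis
    by simp
qed

lemma norm_contour_integral_cauchy_kernel_vertical:
  fixes \<Phi> :: "complex \<Rightarrow> complex"
  assumes uw: "Re u = Re w" and R: "0 < R" "R \<le> \<bar>Re u - x\<bar>"
    and \<Phi>: "continuous_on (closed_segment u w) \<Phi>"
    and bound: "\<And>z. z \<in> closed_segment u w \<Longrightarrow> norm (\<Phi> z) \<le> C"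
  shows "norm (contour_integral (linepath u w) (\<lambda>z. \<Phi> z / (z - of_real x))) \<le> C / R * norm (w - u)"
proof -
  have Re_seg: "Re z = Re u" if "z \<in> closed_segment u w" for z
    using that uw by (simp add: closed_segment_same_Re)
  have "of_real x \<notin> closed_segment u w"
    using Re_seg[of "of_real x"] R by auto
  then have "continuous_on (closed_segment u w) (\<lambda>z. \<Phi> z / (z - of_real x))"
    by (intro continuous_intros \<Phi>) auto
  moreover have C: "0 \<le> C"
    using bound[of u] by (meson ends_in_segment(1) norm_ge_zero order_trans)
  moreover have "norm (\<Phi> z / (z - of_real x)) \<le> C / R" if z: "z \<in> closed_segment u w" for z
  proof -
    have "R \<le> norm (z - of_real x)"
      using abs_Re_le_cmod[of "z - of_real x"] Re_seg[OF z] R by simp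
    then show ?thesis
      unfolding norm_divide using R C bound[OF z] by (intro frac_le) auto
  qed
  ultimately show ?thesis
    using R by (intro contour_integral_bound_linepath contour_integrable_continuous_linepath) auto
qed

lemma Cauchy_integral_formula_rectpath:
  fixes \<Phi> :: "complex \<Rightarrow> complex"
  assumes hol: "\<Phi> holomorphic_on S" and S: "convex S" "open S"
    and sub: "cbox a b \<subseteq> S" and z: "z \<in> box a b"
  shows "contour_integral (rectpath a b) (\<lambda>w. \<Phi> w / (w - z)) = 2 * pi * \<i> * \<Phi> z"
proof -
  have "Re a \<le> Re b" "Im a \<le> Im b"
    using z by (auto simp: in_box_complex_iff)
  then have "path_image (rectpath a b) \<subseteq> S - {z}"
    using path_image_rectpath_cbox_minus_box[of a b] sub z by auto
  then have "((\<lambda>w. \<Phi> w / (w - z)) has_contour_integral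
      (2 * pi * \<i> * winding_number (rectpath a b) z * \<Phi> z)) (rectpath a b)"
    using z sub box_subset_cbox[of a b]
    by (intro Cauchy_integral_formula_convex_simple[OF S(1) hol]) (auto simp: interior_open[OF S(2)])
  then show ?thesis
    using winding_number_rectpath[OF z] by (simp add: contour_integral_unique)
qed

lemma contour_integral_rectpath:
  assumes F: "continuous_on (path_image (rectpath a b)) F"
  defines "a2 \<equiv> Complex (Re b) (Im a)" and "a4 \<equiv> Complex (Re a) (Im b)"
  shows "contour_integral (rectpath a b) F = contour_integral (linepath a a2) F
    + contour_integral (linepath a2 b) F + contour_integral (linepath b a4) F
    + contour_integral (linepath a4 a) F"
proof -
  have rp: "rectpath a b = linepath a a2 +++ linepath a2 b +++ linepath b a4 +++ linepath a4 a"
    by (simp add: rectpath_def Let_def a2_def a4_def)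
  have side: "(F has_contour_integral contour_integral (linepath u w) F) (linepath u w)"
    if "closed_segment u w \<subseteq> path_image (rectpath a b)" for u w
    using that by (intro has_contour_integral_integral contour_integrable_continuous_linepath
        continuous_on_subset[OF F])
  have "(F has_contour_integral contour_integral (linepath a a2) F + (contour_integral (linepath a2 b) F
      + (contour_integral (linepath b a4) F + contour_integral (linepath a4 a) F))) (rectpath a b)"
    unfolding rp using side unfolding rp
    by (intro has_contour_integral_join valid_path_join) (auto simp: path_image_join)
  then show ?thesis
    by (simp add: contour_integral_unique add.assoc)
qed

lemma norm_Cauchy_integral_rectpath_le:
  fixes \<Phi> :: "complex \<Rightarrow> complex"
  assumes hol: "\<Phi> holomorphic_on S" and S: "convex S" "open S"
    and sub: "cbox a b \<subseteq> S" and z: "z \<in> box a b"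
  defines "a2 \<equiv> Complex (Re b) (Im a)" and "a4 \<equiv> Complex (Re a) (Im b)"
  shows "2 * pi * norm (\<Phi> z)
    \<le> norm (contour_integral (linepath a a2) (\<lambda>w. \<Phi> w / (w - z)))
      + norm (contour_integral (linepath a2 b) (\<lambda>w. \<Phi> w / (w - z)))
      + norm (contour_integral (linepath b a4) (\<lambda>w. \<Phi> w / (w - z)))
      + norm (contour_integral (linepath a4 a) (\<lambda>w. \<Phi> w / (w - z)))"
proof -
  have "Re a \<le> Re b" "Im a \<le> Im b"
    using z by (auto simp: in_box_complex_iff)
  then have "path_image (rectpath a b) \<subseteq> S - {z}"
    using path_image_rectpath_cbox_minus_box[of a b] sub z by auto
  then have "continuous_on (path_image (rectpath a b)) (\<lambda>w. \<Phi> w / (w - z))"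
    by (intro continuous_intros continuous_on_subset[OF holomorphic_on_imp_continuous_on[OF hol]]) auto
  from contour_integral_rectpath[OF this]
  have "2 * pi * \<i> * \<Phi> z = contour_integral (linepath a a2) (\<lambda>w. \<Phi> w / (w - z))
      + contour_integral (linepath a2 b) (\<lambda>w. \<Phi> w / (w - z))
      + contour_integral (linepath b a4) (\<lambda>w. \<Phi> w / (w - z))
      + contour_integral (linepath a4 a) (\<lambda>w. \<Phi> w / (w - z))"
    unfolding Cauchy_integral_formula_rectpath[OF hol S sub z] a2_def a4_def .
  moreover have "2 * pi * norm (\<Phi> z) = norm (2 * pi * \<i> * \<Phi> z)"
    by (simp add: norm_mult)
  ultimately show ?thesis
    by (smt (verit) norm_triangle_ineq)
qed

lemma rectangle_cauchy_estimate:
  fixes \<Phi> :: "complex \<Rightarrow> complex"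
  assumes hol: "\<Phi> holomorphic_on S" and S: "convex S" "open S"
    and R: "0 < R" and \<eta>: "0 < \<eta>"
    and sub: "cbox (Complex (x - R) (- \<eta>)) (Complex (x + R) \<eta>) \<subseteq> S"
    and bound: "\<And>w. w \<in> cbox (Complex (x - R) (- \<eta>)) (Complex (x + R) \<eta>) \<Longrightarrow> norm (\<Phi> w) \<le> C"
  shows "2 * pi * norm (\<Phi> (of_real x))
    \<le> (integral {x - R..x + R} (\<lambda>t. norm (\<Phi> (Complex t (- \<eta>))))
        + integral {x - R..x + R} (\<lambda>t. norm (\<Phi> (Complex t \<eta>)))) / \<eta> + 4 * \<eta> * C / R"
proof -
  define a b a2 a4 where "a = Complex (x - R) (- \<eta>)" and "b = Complex (x + R) \<eta>"
    and "a2 = Complex (x + R) (- \<eta>)" and "a4 = Complex (x - R) \<eta>"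
  define F where "F = (\<lambda>w. \<Phi> w / (w - of_real x))"
  have x_box: "of_real x \<in> box a b"
    using R \<eta> by (auto simp: in_box_complex_iff a_def b_def)
  have sub_ab: "cbox a b \<subseteq> S" and bound_ab: "\<And>w. w \<in> cbox a b \<Longrightarrow> norm (\<Phi> w) \<le> C"
    using sub bound by (simp_all add: a_def b_def)
  have sides: "closed_segment a a2 \<union> closed_segment a2 b \<union> closed_segment a4 b \<union> closed_segment a4 a
      \<subseteq> cbox a b"
    using R \<eta> by (auto simp: a_def b_def a2_def a4_def closed_segment_same_Re closed_segment_same_Im
        closed_segment_eq_real_ivl in_cbox_complex_iff)
  have \<Phi>_cont: "continuous_on (closed_segment u w) \<Phi>" if "closed_segment u w \<subseteq> cbox a b" for u w
    using that sub_ab by (blast intro: continuous_on_subset[OF holomorphic_on_imp_continuous_on[OF hol]])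
  have "2 * pi * norm (\<Phi> (of_real x)) \<le> norm (contour_integral (linepath a a2) F)
      + norm (contour_integral (linepath a2 b) F) + norm (contour_integral (linepath b a4) F)
      + norm (contour_integral (linepath a4 a) F)"
    using norm_Cauchy_integral_rectpath_le[OF hol S sub_ab x_box]
    by (simp add: F_def a_def b_def a2_def a4_def)
  also have "\<dots> \<le> integral {x - R..x + R} (\<lambda>t. norm (\<Phi> (Complex t (- \<eta>)))) / \<eta> + C / R * (2 * \<eta>)
      + integral {x - R..x + R} (\<lambda>t. norm (\<Phi> (Complex t \<eta>))) / \<eta> + C / R * (2 * \<eta>)"
  proof (intro add_mono)
    show "norm (contour_integral (linepath a a2) F)
        \<le> integral {x - R..x + R} (\<lambda>t. norm (\<Phi> (Complex t (- \<eta>)))) / \<eta>"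
      using norm_contour_integral_cauchy_kernel_horizontal[of "x - R" "x + R" "- \<eta>" \<Phi> x]
        \<Phi>_cont[of a a2] sides R \<eta> by (simp add: F_def a_def a2_def)
    show "norm (contour_integral (linepath b a4) F)
        \<le> integral {x - R..x + R} (\<lambda>t. norm (\<Phi> (Complex t \<eta>))) / \<eta>"
      using norm_contour_integral_cauchy_kernel_horizontal[of "x - R" "x + R" \<eta> \<Phi> x]
        \<Phi>_cont[of a4 b] sides R \<eta> contour_integral_reversepath[of "linepath a4 b" F]
      by (simp add: F_def a4_def b_def)
    have vertical: "norm (contour_integral (linepath u w) F) \<le> C / R * norm (w - u)"
      if "closed_segment u w \<subseteq> cbox a b" "Re u = Re w" "\<bar>Re u - x\<bar> = R" for u w
      unfolding F_def using that bound_ab R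
      by (intro norm_contour_integral_cauchy_kernel_vertical \<Phi>_cont) auto
    have "norm (b - a2) = 2 * \<eta>" "norm (a - a4) = 2 * \<eta>"
      using \<eta> by (simp_all add: a_def b_def a2_def a4_def cmod_def real_sqrt_mult)
    moreover have "Re a2 = Re b" "\<bar>Re a2 - x\<bar> = R" "Re a4 = Re a" "\<bar>Re a4 - x\<bar> = R"
      using R by (simp_all add: a_def b_def a2_def a4_def)
    ultimately show "norm (contour_integral (linepath a2 b) F) \<le> C / R * (2 * \<eta>)"
      and "norm (contour_integral (linepath a4 a) F) \<le> C / R * (2 * \<eta>)"
      using vertical[of a2 b] vertical[of a4 a] sides by auto
  qed
  finally show ?thesis
    by (simp add: add_divide_distrib algebra_simps)
qed

lemma integral_interval_le_integral_UNIV: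
  fixes f g :: "real \<Rightarrow> real"
  assumes f: "f integrable_on {a..b}" and g: "g integrable_on UNIV"
    and le: "\<And>t. f t \<le> g t" and g_nonneg: "\<And>t. 0 \<le> g t"
  shows "integral {a..b} f \<le> integral UNIV g"
proof -
  have g_ab: "g integrable_on {a..b}"
    using g by (rule integrable_on_subinterval) simp
  have "integral {a..b} f \<le> integral {a..b} g"
    using f g_ab le by (rule integral_le)
  also have "\<dots> \<le> integral UNIV g"
    using g_ab g g_nonneg by (intro integral_subset_le) auto
  finally show ?thesis .
qed

lemma integral_norm_square_gaussian_horizontal_le:
  fixes h :: "complex \<Rightarrow> complex" and P :: "real \<Rightarrow> real"
  assumes h: "continuous_on {s. Im s = y} h"
    and P: "(\<lambda>t. P t * exp (- (t - x)\<^sup>2)) integrable_on UNIV"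
    and P_bound: "\<And>t. (norm (h (Complex t y)))\<^sup>2 \<le> P t"
  shows "integral {a..b} (\<lambda>t. norm ((h (Complex t y))\<^sup>2 * exp (- (Complex t y - of_real x)\<^sup>2)))
    \<le> exp (y\<^sup>2) * integral UNIV (\<lambda>t. P t * exp (- (t - x)\<^sup>2))"
proof -
  have norm_eq: "norm ((h (Complex t y))\<^sup>2 * exp (- (Complex t y - of_real x)\<^sup>2))
      = exp (y\<^sup>2) * ((norm (h (Complex t y)))\<^sup>2 * exp (- (t - x)\<^sup>2))" for t
    unfolding norm_mult norm_power norm_exp_neg_square by (simp add: exp_diff exp_minus field_simps)
  have "continuous_on UNIV (\<lambda>t. h (Complex t y))"
    by (intro continuous_on_compose2[OF h] continuous_intros) auto
  then have "(\<lambda>t. norm ((h (Complex t y))\<^sup>2 * exp (- (Complex t y - of_real x)\<^sup>2))) integrable_on {a..b}"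
    unfolding norm_eq
    by (intro integrable_continuous_interval continuous_intros) (rule continuous_on_subset, auto)
  moreover have "0 \<le> P t" for t
    using P_bound[of t] by (meson order_trans zero_le_power2)
  ultimately have "integral {a..b} (\<lambda>t. norm ((h (Complex t y))\<^sup>2 * exp (- (Complex t y - of_real x)\<^sup>2)))
      \<le> integral UNIV (\<lambda>t. exp (y\<^sup>2) * (P t * exp (- (t - x)\<^sup>2)))"
    using P P_bound unfolding norm_eq
    by (intro integral_interval_le_integral_UNIV integrable_on_mult_right mult_left_mono mult_right_mono) auto
  then show ?thesis
    by simp
qed

lemma strip_cauchy_estimate:
  fixes h :: "complex \<Rightarrow> complex" and P :: "real \<Rightarrow> real"
  assumes hol: "h holomorphic_on {s. \<bar>Im s\<bar> < \<theta>}" and \<eta>: "0 < \<eta>" "\<eta> < \<theta>"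
    and bdd: "\<And>s. \<bar>Im s\<bar> < \<theta> \<Longrightarrow> norm (h s) \<le> B"
    and P: "(\<lambda>t. P t * exp (- (t - x)\<^sup>2)) integrable_on UNIV"
    and P_bound: "\<And>t y. \<bar>y\<bar> = \<eta> \<Longrightarrow> (norm (h (Complex t y)))\<^sup>2 \<le> P t"
  shows "pi * (norm (h (of_real x)))\<^sup>2 \<le> exp (\<eta>\<^sup>2) / \<eta> * integral UNIV (\<lambda>t. P t * exp (- (t - x)\<^sup>2))"
proof -
  define S where "S = {s. \<bar>Im s\<bar> < \<theta>}"
  define \<Phi> where "\<Phi> = (\<lambda>s. (h s)\<^sup>2 * exp (- (s - of_real x)\<^sup>2))"
  define I where "I = integral UNIV (\<lambda>t. P t * exp (- (t - x)\<^sup>2))"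
  have "S = {s. Im s < \<theta>} \<inter> {s. - \<theta> < Im s}"
    by (auto simp: S_def)
  then have S: "convex S" "open S"
    by (simp_all add: convex_Int convex_halfspace_Im_lt convex_halfspace_Im_gt
        open_Int open_halfspace_Im_lt open_halfspace_Im_gt)
  have \<Phi>_hol: "\<Phi> holomorphic_on S"
    unfolding \<Phi>_def using hol by (intro holomorphic_intros) (simp add: S_def)
  have cbox_S: "cbox (Complex (x - R) (- \<eta>)) (Complex (x + R) \<eta>) \<subseteq> S" for R
    using \<eta> by (auto simp: S_def in_cbox_complex_iff)
  have \<Phi>_bound: "norm (\<Phi> w) \<le> B\<^sup>2 * exp (\<eta>\<^sup>2)"
    if "w \<in> cbox (Complex (x - R) (- \<eta>)) (Complex (x + R) \<eta>)" for R w
    unfolding \<Phi>_def using that \<eta> bdd[of w]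
    by (intro norm_square_mult_gaussian_le) (auto simp: in_cbox_complex_iff)
  have horizontal: "integral {x - R..x + R} (\<lambda>t. norm (\<Phi> (Complex t y))) \<le> exp (\<eta>\<^sup>2) * I"
    if y: "\<bar>y\<bar> = \<eta>" for R y
  proof -
    have "continuous_on {s. Im s = y} h"
      using y \<eta> by (intro continuous_on_subset[OF holomorphic_on_imp_continuous_on[OF hol]]) auto
    then show ?thesis
      using integral_norm_square_gaussian_horizontal_le[OF _ P P_bound[OF y], of "x - R" "x + R"] y
      by (simp add: \<Phi>_def I_def power2_abs[of y, symmetric])
  qed
  have "2 * pi * (norm (h (of_real x)))\<^sup>2 \<le> 2 * (exp (\<eta>\<^sup>2) / \<eta> * I)"
  proof (rule le_of_forall_pos_le_add_divide)
    fix R :: real assume "0 < R"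
    have "2 * pi * (norm (h (of_real x)))\<^sup>2 = 2 * pi * norm (\<Phi> (of_real x))"
      by (simp add: \<Phi>_def norm_mult norm_power)
    also have "\<dots> \<le> (integral {x - R..x + R} (\<lambda>t. norm (\<Phi> (Complex t (- \<eta>))))
        + integral {x - R..x + R} (\<lambda>t. norm (\<Phi> (Complex t \<eta>)))) / \<eta> + 4 * \<eta> * (B\<^sup>2 * exp (\<eta>\<^sup>2)) / R"
      by (rule rectangle_cauchy_estimate[OF \<Phi>_hol S \<open>0 < R\<close> \<eta>(1) cbox_S \<Phi>_bound])
    also have "\<dots> \<le> (exp (\<eta>\<^sup>2) * I + exp (\<eta>\<^sup>2) * I) / \<eta> + 4 * \<eta> * (B\<^sup>2 * exp (\<eta>\<^sup>2)) / R"
      using horizontal[of "- \<eta>" R] horizontal[of \<eta> R] \<eta> \<open>0 < R\<close>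
      by (intro add_mono divide_right_mono) auto
    finally show "2 * pi * (norm (h (of_real x)))\<^sup>2
        \<le> 2 * (exp (\<eta>\<^sup>2) / \<eta> * I) + 4 * \<eta> * (B\<^sup>2 * exp (\<eta>\<^sup>2)) / R"
      by (simp add: mult.commute)
  qed
  then show ?thesis
    by (simp add: I_def)
qed

lemma exp_in_sector:
  assumes "\<theta> < pi" "\<bar>Im s\<bar> < \<theta>"
  shows "exp s \<in> sector \<theta>"
  using assms Arg_exp[of s] unfolding sector_def by auto

lemma holomorphic_on_coordinate_exp:
  assumes J: "complex_structure J" and \<theta>: "\<theta> < pi" and hol: "holomorphic_wrt J f (sector \<theta>)"
  shows "(\<lambda>s. coordinate J v (f (exp s))) holomorphic_on {s. \<bar>Im s\<bar> < \<theta>}"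
proof -
  have "exp ` {s. \<bar>Im s\<bar> < \<theta>} \<subseteq> sector \<theta>"
    using exp_in_sector[OF \<theta>] by blast
  then show ?thesis
    using holomorphic_on_compose_gen[OF holomorphic_on_exp holomorphic_on_coordinate[OF J hol]]
    by (simp add: o_def)
qed

lemma norm_sq_le_gaussian_average:
  fixes J :: "'a::real_inner \<Rightarrow> 'a" and f :: "complex \<Rightarrow> 'a" and P :: "real \<Rightarrow> real"
  assumes J: "complex_structure J" and \<theta>: "\<theta> < pi" and \<eta>: "0 < \<eta>" "\<eta> < \<theta>"
    and hol: "holomorphic_wrt J f (sector \<theta>)"
    and bdd: "\<And>z. z \<in> sector \<theta> \<Longrightarrow> norm (f z) \<le> M"
    and P: "(\<lambda>t. P t * exp (- (t - x)\<^sup>2)) integrable_on UNIV"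
    and P_bound: "\<And>t y. \<bar>y\<bar> = \<eta> \<Longrightarrow> (norm (f (cis y * of_real (exp t))))\<^sup>2 \<le> P t"
  shows "(norm (f (of_real (exp x))))\<^sup>2
    \<le> 4 * exp (\<eta>\<^sup>2) / (pi * \<eta>) * integral UNIV (\<lambda>t. P t * exp (- (t - x)\<^sup>2))"
proof -
  define y where "y = f (of_real (exp x))"
  define h where "h = (\<lambda>s. coordinate J (sgn y) (f (exp s)))"
  have h_le: "norm (h s) \<le> 2 * norm (f (exp s))" for s
    unfolding h_def by (rule norm_coordinate_le[OF J]) (simp add: norm_sgn)
  have "h holomorphic_on {s. \<bar>Im s\<bar> < \<theta>}"
    unfolding h_def by (rule holomorphic_on_coordinate_exp[OF J \<theta> hol])
  moreover have "norm (h s) \<le> 2 * M" if "\<bar>Im s\<bar> < \<theta>" for s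
    using h_le[of s] bdd[OF exp_in_sector[OF \<theta> that]] by linarith
  moreover have "(\<lambda>t. 4 * P t * exp (- (t - x)\<^sup>2)) integrable_on UNIV"
    using integrable_on_mult_right[OF P, of 4] by (simp add: mult.assoc)
  moreover have "(norm (h (Complex t s)))\<^sup>2 \<le> 4 * P t" if "\<bar>s\<bar> = \<eta>" for t s
  proof -
    have "exp (Complex t s) = cis s * of_real (exp t)"
      by (simp add: exp_eq_polar mult.commute)
    then have "norm (h (Complex t s)) \<le> 2 * norm (f (cis s * of_real (exp t)))"
      using h_le[of "Complex t s"] by simp
    then have "(norm (h (Complex t s)))\<^sup>2 \<le> (2 * norm (f (cis s * of_real (exp t))))\<^sup>2"
      by (rule power_mono) simp
    then show ?thesis
      using P_bound[OF that, of t] by (simp add: power_mult_distrib)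
  qed
  ultimately have "pi * (norm (h (of_real x)))\<^sup>2
      \<le> exp (\<eta>\<^sup>2) / \<eta> * integral UNIV (\<lambda>t. 4 * P t * exp (- (t - x)\<^sup>2))"
    by (rule strip_cauchy_estimate[OF _ \<eta>])
  moreover have "h (of_real x) = of_real (norm y)"
    unfolding h_def using coordinate_sgn_self[OF J] by (simp add: y_def exp_of_real)
  moreover have "integral UNIV (\<lambda>t. 4 * P t * exp (- (t - x)\<^sup>2))
      = 4 * integral UNIV (\<lambda>t. P t * exp (- (t - x)\<^sup>2))"
    using integral_mult[OF P, of 4] by (simp add: mult.assoc)
  ultimately show ?thesis
    using \<eta> by (simp add: y_def field_simps)
qed

lemma sum_power_le_inverse:
  fixes r :: real
  assumes "finite K" "0 \<le> r" "r < 1"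
  shows "(\<Sum>k\<in>K. r ^ k) \<le> 1 / (1 - r)"
proof -
  have "(\<Sum>k\<in>K. r ^ k) \<le> (\<Sum>k. r ^ k)"
    using assms by (intro sum_le_suminf summable_geometric) auto
  also have "\<dots> = 1 / (1 - r)"
    using assms by (simp add: suminf_geometric)
  finally show ?thesis .
qed

lemma sum_power_nat_abs_le:
  fixes r :: real
  assumes D: "finite D" and r: "0 \<le> r" "r < 1"
  shows "(\<Sum>d\<in>D. r ^ nat \<bar>d\<bar>) \<le> 2 / (1 - r)"
proof -
  have half: "(\<Sum>d\<in>A. r ^ nat \<bar>d\<bar>) \<le> 1 / (1 - r)"
    if "A \<subseteq> D" "inj_on (\<lambda>d. nat \<bar>d\<bar>) A" for A
  proof -
    have "(\<Sum>d\<in>A. r ^ nat \<bar>d\<bar>) = (\<Sum>k\<in>(\<lambda>d. nat \<bar>d\<bar>) ` A. r ^ k)"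
      by (simp add: sum.reindex[OF that(2)])
    also have "\<dots> \<le> 1 / (1 - r)"
      using finite_subset[OF that(1) D] r by (intro sum_power_le_inverse) auto
    finally show ?thesis .
  qed
  have "(\<Sum>d\<in>D. r ^ nat \<bar>d\<bar>)
      = (\<Sum>d\<in>D \<inter> {0..}. r ^ nat \<bar>d\<bar>) + (\<Sum>d\<in>D \<inter> {..<0}. r ^ nat \<bar>d\<bar>)"
    using D by (subst sum.union_disjoint[symmetric]) (auto intro: sum.cong)
  also have "\<dots> \<le> 1 / (1 - r) + 1 / (1 - r)"
    by (intro add_mono half) (auto simp: inj_on_def)
  finally show ?thesis by simp
qed

lemma gaussian_lattice_term_le:
  fixes t :: real and n :: int
  shows "exp (- (t - of_int n * ln 2)\<^sup>2) \<le> 2 * exp (1/4) * (1/2) ^ nat \<bar>n - \<lfloor>t / ln 2\<rfloor>\<bar>"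
proof -
  define c :: real where "c = ln 2"
  have c: "0 < c" by (simp add: c_def)
  define m where "m = \<lfloor>t / c\<rfloor>"
  define d where "d = n - m"
  have "of_int m \<le> t / c"
    unfolding m_def by (rule of_int_floor_le)
  then have m_le: "of_int m * c \<le> t"
    using c by (simp add: pos_le_divide_eq)
  have m_gt: "t < of_int m * c + c"
  proof -
    have "t / c < of_int m + 1" unfolding m_def by linarith
    then show ?thesis using c by (simp add: divide_less_eq algebra_simps)
  qed
  define u where "u = t - of_int n * c"
  have n_eq: "of_int n * c = of_int m * c + of_int d * c"
    by (simp add: d_def algebra_simps)
  have u_ge: "c * of_int \<bar>d\<bar> - c \<le> \<bar>u\<bar>"
    using m_le m_gt n_eq c unfolding u_def by (cases "0 \<le> d") (simp_all add: mult.commute)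
  have "\<bar>u\<bar> - 1/4 \<le> u\<^sup>2"
    using zero_le_power2[of "\<bar>u\<bar> - 1/2"] by (simp add: power2_eq_square algebra_simps)
  then have "exp (- u\<^sup>2) \<le> exp (1/4 + c - c * of_int \<bar>d\<bar>)"
    using u_ge by simp
  also have "\<dots> = exp (1/4) * exp c * exp (of_nat (nat \<bar>d\<bar>) * (- c))"
    by (simp add: exp_add[symmetric] exp_diff algebra_simps)
  also have "\<dots> = 2 * exp (1/4) * (1/2) ^ nat \<bar>d\<bar>"
    unfolding exp_of_nat_mult by (simp add: c_def exp_minus inverse_eq_divide)
  finally show ?thesis
    by (simp add: u_def d_def m_def c_def)
qed

lemma sum_gaussian_lattice_le:
  fixes t :: real
  assumes "finite N"
  shows "(\<Sum>n\<in>N. exp (- (t - of_int n * ln 2)\<^sup>2)) \<le> 8 * exp (1/4)"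
proof -
  define m where "m = \<lfloor>t / ln 2\<rfloor>"
  have "(\<Sum>n\<in>N. exp (- (t - of_int n * ln 2)\<^sup>2)) \<le> (\<Sum>n\<in>N. 2 * exp (1/4) * (1/2::real) ^ nat \<bar>n - m\<bar>)"
    unfolding m_def by (intro sum_mono gaussian_lattice_term_le)
  also have "\<dots> = 2 * exp (1/4) * (\<Sum>d\<in>(\<lambda>n. n - m) ` N. (1/2::real) ^ nat \<bar>d\<bar>)"
    by (simp add: sum_distrib_left sum.reindex inj_on_def)
  also have "(\<Sum>d\<in>(\<lambda>n. n - m) ` N. (1/2::real) ^ nat \<bar>d\<bar>) \<le> 4"
    using sum_power_nat_abs_le[of "(\<lambda>n. n - m) ` N" "1/2"] assms by simp
  finally show ?thesis by simp
qed

lemma integrable_mult_gaussian: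
  fixes H :: "real \<Rightarrow> real"
  assumes "H absolutely_integrable_on UNIV"
  shows "(\<lambda>t. H t * exp (- (t - x)\<^sup>2)) integrable_on UNIV"
proof -
  have "(\<lambda>t. exp (- (t - x)\<^sup>2) * H t) absolutely_integrable_on UNIV"
  proof (rule absolutely_integrable_bounded_measurable_product_real)
    show "(\<lambda>t. exp (- (t - x)\<^sup>2)) \<in> borel_measurable (lebesgue_on UNIV)"
      by (intro continuous_imp_measurable_on_sets_lebesgue continuous_intros) auto
    show "bounded ((\<lambda>t. exp (- (t - x)\<^sup>2)) ` UNIV)"
      unfolding bounded_iff by (intro exI[of _ 1]) auto
  qed (use assms in auto)
  then show ?thesis
    using set_lebesgue_integral_eq_integral(1) by (simp add: mult.commute)
qed

lemma summable_on_gaussian_lattice_averages: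
  fixes a :: "int \<Rightarrow> real" and H :: "real \<Rightarrow> real"
  assumes H: "H absolutely_integrable_on UNIV" "\<And>t. 0 \<le> H t"
    and a: "\<And>n. 0 \<le> a n" and C: "0 \<le> C"
    and a_le: "\<And>n. a n \<le> C * integral UNIV (\<lambda>t. H t * exp (- (t - of_int n * ln 2)\<^sup>2))"
  shows "a summable_on UNIV"
proof (rule nonneg_bdd_above_summable_on)
  define L :: real where "L = 8 * exp (1/4)"
  have H_int: "H integrable_on UNIV"
    using H(1) set_lebesgue_integral_eq_integral(1) by blast
  have "sum a N \<le> C * (L * integral UNIV H)" if N: "finite N" for N
  proof -
    have "sum a N \<le> (\<Sum>n\<in>N. C * integral UNIV (\<lambda>t. H t * exp (- (t - of_int n * ln 2)\<^sup>2)))"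
      by (intro sum_mono a_le)
    also have "\<dots> = C * integral UNIV (\<lambda>t. H t * (\<Sum>n\<in>N. exp (- (t - of_int n * ln 2)\<^sup>2)))"
      by (simp add: sum_distrib_left integral_sum[OF N integrable_mult_gaussian[OF H(1)]])
    also have "\<dots> \<le> C * integral UNIV (\<lambda>t. L * H t)"
    proof (intro mult_left_mono C integral_le)
      show "(\<lambda>t. H t * (\<Sum>n\<in>N. exp (- (t - of_int n * ln 2)\<^sup>2))) integrable_on UNIV"
        unfolding sum_distrib_left by (intro integrable_sum N integrable_mult_gaussian H(1))
      show "(\<lambda>t. L * H t) integrable_on UNIV"
        by (intro integrable_on_mult_right H_int)
      show "H t * (\<Sum>n\<in>N. exp (- (t - of_int n * ln 2)\<^sup>2)) \<le> L * H t" for t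
        using mult_left_mono[OF sum_gaussian_lattice_le[OF N, of t] H(2)[of t]]
        by (simp add: L_def mult.commute)
    qed
    also have "\<dots> = C * (L * integral UNIV H)"
      by simp
    finally show ?thesis .
  qed
  then show "bdd_above (sum a ` {N. N \<subseteq> UNIV \<and> finite N})"
    by (intro bdd_aboveI[where M = "C * (L * integral UNIV H)"]) auto
qed (use a in simp)

lemma absolutely_integrable_exp_substitution:
  fixes h :: "real \<Rightarrow> real"
  assumes "set_integrable lborel {0<..} h"
  shows "(\<lambda>t. exp t * h (exp t)) absolutely_integrable_on UNIV"
proof -
  have "h absolutely_integrable_on {0<..}"
    using assms unfolding set_integrable_def by (metis integrable_completion borel_measurable_integrable)
  moreover have "exp ` UNIV = {0::real<..}"
  proof (intro equalityI subsetI)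
    fix y :: real assume "y \<in> {0<..}"
    then show "y \<in> exp ` UNIV"
      using exp_ln[of y] by (metis greaterThan_iff rangeI)
  qed auto
  ultimately have "(\<lambda>t. \<bar>exp t\<bar> *\<^sub>R h (exp t)) absolutely_integrable_on UNIV"
    using absolutely_integrable_change_of_variables_real[of UNIV exp exp h]
    by (auto intro: DERIV_exp has_field_derivative_at_within simp: inj_on_def)
  then show ?thesis by simp
qed

theorem lemma3p5:
  fixes J :: "'a::{real_inner, complete_space} \<Rightarrow> 'a"
    and f :: "complex \<Rightarrow> 'a"
    and \<theta> \<eta> :: real
  assumes J: "complex_structure J"
    and theta: "0 < \<theta>" "\<theta> < pi"
    and hol: "holomorphic_wrt J f (sector \<theta>)"
    and bdd: "bounded (f ` sector \<theta>)"
    and eta: "0 < \<eta>" "\<eta> < \<theta>"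
    and L2p: "set_integrable lborel {0<..}
                (\<lambda>t::real. (norm (f (cis \<eta> * complex_of_real t)))\<^sup>2 / t)"
    and L2m: "set_integrable lborel {0<..}
                (\<lambda>t::real. (norm (f (cis (- \<eta>) * complex_of_real t)))\<^sup>2 / t)"
  shows "(\<lambda>n::int. (norm (f (complex_of_real (2 powr real_of_int n))))\<^sup>2) summable_on UNIV"
proof -
  obtain M where M: "\<And>z. z \<in> sector \<theta> \<Longrightarrow> norm (f z) \<le> M"
    using bdd unfolding bounded_iff by auto
  define H where "H t = (norm (f (cis \<eta> * of_real (exp t))))\<^sup>2 + (norm (f (cis (- \<eta>) * of_real (exp t))))\<^sup>2"
    for t
  have H: "H absolutely_integrable_on UNIV"
    unfolding H_def using absolutely_integrable_exp_substitution[OF L2p]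
      absolutely_integrable_exp_substitution[OF L2m] by (auto intro: set_integral_add)
  have H_bound: "(norm (f (cis y * of_real (exp t))))\<^sup>2 \<le> H t" if "\<bar>y\<bar> = \<eta>" for t y
    using that by (cases "0 \<le> y") (auto simp: H_def)
  have "(norm (f (of_real (2 powr of_int n))))\<^sup>2
      \<le> 4 * exp (\<eta>\<^sup>2) / (pi * \<eta>) * integral UNIV (\<lambda>t. H t * exp (- (t - of_int n * ln 2)\<^sup>2))" for n
  proof -
    have "(2::real) powr of_int n = exp (of_int n * ln 2)"
      by (simp add: powr_def mult.commute)
    then show ?thesis
      using norm_sq_le_gaussian_average[OF J theta(2) eta hol M integrable_mult_gaussian[OF H] H_bound]
      by simp
  qed
  moreover have "0 \<le> 4 * exp (\<eta>\<^sup>2) / (pi * \<eta>)"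
    using eta by simp
  ultimately show ?thesis
    using H by (intro summable_on_gaussian_lattice_averages[of H]) (auto simp: H_def)
qed

end
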